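(* Let $z \in \mathbb{R}$ with $|z| > 1$, and for $k \ge 0$ define \[ \mathrm{BF}_{01}(z; k) = \sqrt{1+k}\,\exp\left\{-\frac{z^2 k}{2(1+k)}\right\}. \] Then there exists a unique $k^* > 0$ such that $\mathrm{BF}_{01}(z; k^* ) = 1$. Moreover, $k^*$ satisfies \[ (1+k^* )\ln(1+k^* ) = z^2 k^*. \] Furthermore, for $0 < k < k^*$ one has $\mathrm{BF}_{01}(z; k) < 1$, and for $k > k^*$ one has $\mathrm{BF}_{01}(z; k) > 1$.
   Context: Setting: $X_1,\dots,X_n$ i.i.d. $\mathcal{N}(\mu,1)$, testing $H_0:\mu=0$ versus $H_1:\mu\neq 0$, with prior $\mu\mid H_1\sim\mathcal{N}(0,\tau^2)$, $\tau^2>0$. With $z=\sqrt{n}\,\bar x$ and $k = n\tau^2$, the Bayes factor in favour of $H_0$ is $\mathrm{BF}_{01}(z;k)$ as defined in the claim. The value $k^*$ is called the flip point; $\mathrm{BF}_{01}<1$ is interpreted as evidence for $H_1$ and $\mathrm{BF}_{01}>1$ as evidence for $H_0$. *)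

theory Defs
  imports Complex_Main
begin

definition BF01 :: "real \<Rightarrow> real \<Rightarrow> real" where
  "BF01 z k = sqrt (1 + k) * exp (- (z\<^sup>2 * k) / (2 * (1 + k)))"

end

theory Submission
  imports Defs
begin

text \<open>For \<open>k > -1\<close>, \<open>2 (1 + k) ln BF01(z; k) = (1 + k) ln (1 + k) - z\<^sup>2 k\<close>. The right-hand
  side vanishes at \<open>k = 0\<close>, has derivative \<open>ln (1 + k) + 1 - z\<^sup>2\<close>, and so for \<open>z\<^sup>2 > 1\<close>
  it first decreases strictly (becoming negative) up to \<open>k = exp (z\<^sup>2 - 1) - 1\<close> and then
  increases strictly to infinity. Hence it has exactly one positive zero, the flip point,
  and is negative before and positive after it.\<close>

definition flip_gap :: "real \<Rightarrow> real \<Rightarrow> real" where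
  "flip_gap c k = (1 + k) * ln (1 + k) - c * k"

lemma has_real_derivative_flip_gap:
  "x > -1 \<Longrightarrow> (flip_gap c has_real_derivative ln (1 + x) + 1 - c) (at x)"
  unfolding flip_gap_def by (auto intro!: derivative_eq_intros simp: field_simps)

lemma continuous_on_flip_gap: "a > -1 \<Longrightarrow> continuous_on {a..b} (flip_gap c)"
  by (rule DERIV_continuous_on[where D = "\<lambda>x. ln (1 + x) + 1 - c"])
    (auto intro!: has_field_derivative_at_within has_real_derivative_flip_gap)

lemma flip_gap_strict_antimono:
  assumes "-1 < a" "a < b" "b \<le> exp (c - 1) - 1"
  shows "flip_gap c b < flip_gap c a"
proof (rule DERIV_neg_imp_decreasing_open[OF \<open>a < b\<close> _ continuous_on_flip_gap[OF \<open>-1 < a\<close>]])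
  fix x assume "a < x" "x < b"
  with assms have "ln (1 + x) < ln (exp (c - 1))"
    by (subst ln_less_cancel_iff) auto
  with \<open>-1 < a\<close> \<open>a < x\<close> show "\<exists>y. (flip_gap c has_real_derivative y) (at x) \<and> y < 0"
    using has_real_derivative_flip_gap[of x c] by auto
qed

lemma flip_gap_strict_mono:
  assumes "exp (c - 1) - 1 \<le> a" "a < b"
  shows "flip_gap c a < flip_gap c b"
proof -
  have "-1 < a"
    using assms(1) exp_gt_zero[of "c - 1"] by linarith
  show ?thesis
  proof (rule DERIV_pos_imp_increasing_open[OF \<open>a < b\<close> _ continuous_on_flip_gap[OF \<open>-1 < a\<close>]])
    fix x assume "a < x" "x < b"
    with assms \<open>-1 < a\<close> have "ln (exp (c - 1)) < ln (1 + x)"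
      by (subst ln_less_cancel_iff) auto
    with \<open>-1 < a\<close> \<open>a < x\<close> show "\<exists>y. (flip_gap c has_real_derivative y) (at x) \<and> y > 0"
      using has_real_derivative_flip_gap[of x c] by auto
  qed
qed

lemma flip_gap_root_beyond_minimum:
  assumes "c > 1"
  obtains ks where "exp (c - 1) - 1 < ks" "flip_gap c ks = 0"
proof -
  define m where "m = exp (c - 1) - 1"
  \<comment> \<open>\<open>flip_gap c m = c - exp (c - 1)\<close> and \<open>flip_gap c (exp c - 1) = c\<close>\<close>
  have "c < exp (c - 1)"
    using exp_minus_greater[of "1 - c"] assms by simp
  then have "0 < m" and flip_gap_m: "flip_gap c m < 0"
    using assms unfolding m_def flip_gap_def by (simp_all add: algebra_simps)
  have "m < exp c - 1" and "flip_gap c (exp c - 1) > 0"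
    using assms unfolding m_def flip_gap_def by (simp_all add: algebra_simps)
  then obtain ks where "m \<le> ks" "flip_gap c ks = 0"
    using IVT'[of "flip_gap c" m 0 "exp c - 1"] flip_gap_m continuous_on_flip_gap[of m]
      \<open>0 < m\<close> by auto
  with flip_gap_m have "m < ks"
    by (cases "m = ks") auto
  then show thesis
    using that \<open>flip_gap c ks = 0\<close> unfolding m_def by blast
qed

lemma flip_gap_unique_positive_root:
  assumes "c > 1"
  obtains ks where "ks > 0" "flip_gap c ks = 0"
    "\<And>k. 0 < k \<Longrightarrow> k < ks \<Longrightarrow> flip_gap c k < 0"
    "\<And>k. ks < k \<Longrightarrow> flip_gap c k > 0"
proof -
  obtain ks where "exp (c - 1) - 1 < ks" "flip_gap c ks = 0"
    using flip_gap_root_beyond_minimum[OF assms] .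
  have "0 < exp (c - 1) - 1"
    using exp_gt_one[of "c - 1"] assms by simp
  show thesis
  proof
    show "0 < ks"
      using \<open>0 < exp (c - 1) - 1\<close> \<open>exp (c - 1) - 1 < ks\<close> by linarith
    show "flip_gap c ks = 0" by fact
  next
    fix k assume "0 < k" "k < ks"
    show "flip_gap c k < 0"
    proof (cases "k \<le> exp (c - 1) - 1")
      case True
      then have "flip_gap c k < flip_gap c 0"
        using flip_gap_strict_antimono[of 0 k c] \<open>0 < k\<close> by simp
      then show ?thesis
        by (simp add: flip_gap_def)
    next
      case False
      then show ?thesis
        using flip_gap_strict_mono[of c k ks] \<open>k < ks\<close> \<open>flip_gap c ks = 0\<close> by simp
    qed
  next
    fix k assume "ks < k"
    then show "flip_gap c k > 0"
      using flip_gap_strict_mono[of c ks k] \<open>exp (c - 1) - 1 < ks\<close> \<open>flip_gap c ks = 0\<close>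
      by simp
  qed
qed

lemma BF01_eq_exp_flip_gap:
  assumes "k > -1"
  shows "BF01 z k = exp (flip_gap (z\<^sup>2) k / (2 * (1 + k)))"
proof -
  have "sqrt (1 + k) = exp (ln (1 + k) / 2)"
    using assms by (simp add: powr_half_sqrt[symmetric] powr_def)
  then have "BF01 z k = exp (ln (1 + k) / 2 + - (z\<^sup>2 * k) / (2 * (1 + k)))"
    unfolding BF01_def by (simp add: exp_add[symmetric])
  also have "ln (1 + k) / 2 + - (z\<^sup>2 * k) / (2 * (1 + k)) = flip_gap (z\<^sup>2) k / (2 * (1 + k))"
    using assms unfolding flip_gap_def by (simp add: field_simps)
  finally show ?thesis .
qed

lemma BF01_less_1_iff: "k > -1 \<Longrightarrow> BF01 z k < 1 \<longleftrightarrow> flip_gap (z\<^sup>2) k < 0"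
  by (simp add: BF01_eq_exp_flip_gap divide_less_0_iff)

lemma BF01_greater_1_iff: "k > -1 \<Longrightarrow> BF01 z k > 1 \<longleftrightarrow> flip_gap (z\<^sup>2) k > 0"
  by (simp add: BF01_eq_exp_flip_gap zero_less_divide_iff)

lemma BF01_eq_1_iff: "k > -1 \<Longrightarrow> BF01 z k = 1 \<longleftrightarrow> flip_gap (z\<^sup>2) k = 0"
  by (simp add: BF01_eq_exp_flip_gap)

theorem theorem1:
  fixes z :: real
  assumes "\<bar>z\<bar> > 1"
  shows "\<exists>ks. ks > 0 \<and> BF01 z ks = 1
           \<and> (\<forall>k. k > 0 \<and> BF01 z k = 1 \<longrightarrow> k = ks)
           \<and> (1 + ks) * ln (1 + ks) = z\<^sup>2 * ks
           \<and> (\<forall>k. 0 < k \<and> k < ks \<longrightarrow> BF01 z k < 1)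
           \<and> (\<forall>k. k > ks \<longrightarrow> BF01 z k > 1)"
proof -
  have "z\<^sup>2 > 1"
    using assms by (metis abs_ge_zero less_1_mult power2_abs power2_eq_square)
  then obtain ks where "ks > 0" "flip_gap (z\<^sup>2) ks = 0"
    and below: "\<And>k. 0 < k \<Longrightarrow> k < ks \<Longrightarrow> flip_gap (z\<^sup>2) k < 0"
    and above: "\<And>k. ks < k \<Longrightarrow> flip_gap (z\<^sup>2) k > 0"
    using flip_gap_unique_positive_root by blast
  show ?thesis
  proof (intro exI[of _ ks] conjI allI impI)
    show "ks > 0" by fact
    show "BF01 z ks = 1" "(1 + ks) * ln (1 + ks) = z\<^sup>2 * ks"
      using \<open>ks > 0\<close> \<open>flip_gap (z\<^sup>2) ks = 0\<close> by (simp_all add: BF01_eq_1_iff flip_gap_def)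
    fix k
    show "0 < k \<and> k < ks \<Longrightarrow> BF01 z k < 1"
      using below by (simp add: BF01_less_1_iff)
    show "ks < k \<Longrightarrow> BF01 z k > 1"
      using above \<open>ks > 0\<close> by (simp add: BF01_greater_1_iff)
    show "0 < k \<and> BF01 z k = 1 \<Longrightarrow> k = ks"
      using below[of k] above[of k] by (force simp: BF01_eq_1_iff)
  qed
qed

end
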